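(* Let $n>1$, let $D$ be a set, let $f:\mathcal{S}^n\to D$ be a multidimensional rightward function, and let $\odot:D\times D\to D$ be a binary operator. The following are equivalent: (1) $f$ is $\odot$-homomorphic; (2) $f$ is memoryless, witnessed by some rightward or leftward $g:\mathcal{S}^{n-1}\to D$ and some $\oplus:D\times D\to D$ with $f(\sigma\bullet[\delta])=f(\sigma)\oplus g(\delta)$ for all $\sigma\in\mathcal{S}^n,\delta\in\mathcal{S}^{n-1}$, and the summarized version $h:\mathcal{S}_D\to D$ of $f$, defined by $h([])=f([])$ and $h(x\bullet[a])=h(x)\oplus a$ for all $x\in\mathcal{S}_D,a\in D$, is $\odot$-homomorphic.
   Context: $\mathit{Sc}$ is a set of scalars. $\mathcal{S}^0=\mathit{Sc}$ and, for $n\ge1$, $\mathcal{S}^n$ is the set of finite sequences of elements of $\mathcal{S}^{n-1}$; $\mathcal{S}_D$ is the set of finite sequences over $D$; $\bullet$ is concatenation, $[]$ the empty sequence, $[a]$ a one-element sequence. A function $g$ on sequences is rightward if there is an operator $\oplus'$ with $g(x\bullet[a])=g(x)\oplus' a$ for all $x,a$; leftward if there is $\otimes'$ with $g([a]\bullet x)=a\otimes' g(x)$. A function $f:\mathcal{S}^n\to D$ ($n>1$) is multidimensional rightward if there exist a family $\mathbb{G}:D\to(\mathcal{S}^{n-1}\to D)$ of rightward (or leftward) functions and an operator $\otimes:D\times D\to D$ such that $f(\sigma\bullet[\delta])=f(\sigma)\otimes\mathbb{G}(f(\sigma))(\delta)$ for all $\sigma\in\mathcal{S}^n,\delta\in\mathcal{S}^{n-1}$.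 A function $F$ on sequences is $\odot$-homomorphic if $F(x\bullet y)=F(x)\odot F(y)$ for all $x,y$. *)

theory Defs
  imports Main
begin

text \<open>S^(n-1) is represented as the type 'c list, where the
  (arbitrary) type 'c plays the role of S^(n-2); S^n is then 'c list list.\<close>

definition rightward :: "('x list \<Rightarrow> 'd) \<Rightarrow> bool" where
  "rightward g \<longleftrightarrow> (\<exists>opr :: 'd \<Rightarrow> 'x \<Rightarrow> 'd. \<forall>x a. g (x @ [a]) = opr (g x) a)"

definition leftward :: "('x list \<Rightarrow> 'd) \<Rightarrow> bool" where
  "leftward g \<longleftrightarrow> (\<exists>opl :: 'x \<Rightarrow> 'd \<Rightarrow> 'd. \<forall>x a. g ([a] @ x) = opl a (g x))"

definition homomorphic :: "('x list \<Rightarrow> 'd) \<Rightarrow> ('d \<Rightarrow> 'd \<Rightarrow> 'd) \<Rightarrow> bool" where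
  "homomorphic F odot \<longleftrightarrow> (\<forall>x y. F (x @ y) = odot (F x) (F y))"

definition multidim_rightward :: "('c list list \<Rightarrow> 'd) \<Rightarrow> bool" where
  "multidim_rightward f \<longleftrightarrow>
     (\<exists>(G :: 'd \<Rightarrow> 'c list \<Rightarrow> 'd) (otimes :: 'd \<Rightarrow> 'd \<Rightarrow> 'd).
        (\<forall>d. rightward (G d) \<or> leftward (G d)) \<and>
        (\<forall>\<sigma> \<delta>. f (\<sigma> @ [\<delta>]) = otimes (f \<sigma>) (G (f \<sigma>) \<delta>)))"

definition memoryless_wit :: "('c list list \<Rightarrow> 'd) \<Rightarrow> ('c list \<Rightarrow> 'd) \<Rightarrow> ('d \<Rightarrow> 'd \<Rightarrow> 'd) \<Rightarrow> bool" where
  "memoryless_wit f g oplus \<longleftrightarrow>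
     (rightward g \<or> leftward g) \<and> (\<forall>\<sigma> \<delta>. f (\<sigma> @ [\<delta>]) = oplus (f \<sigma>) (g \<delta>))"

definition summarized :: "('c list list \<Rightarrow> 'd) \<Rightarrow> ('d \<Rightarrow> 'd \<Rightarrow> 'd) \<Rightarrow> 'd list \<Rightarrow> 'd" where
  "summarized f oplus = foldl oplus (f [])"

lemma summarized_Nil: "summarized f oplus [] = f []"
  by (simp add: summarized_def)

lemma summarized_snoc: "summarized f oplus (x @ [a]) = oplus (summarized f oplus x) a"
  by (simp add: summarized_def)

end

theory Submission
  imports Defs
begin

text \<open>If f is \<open>\<odot>\<close>-homomorphic, then f(\<sigma> @ [\<delta>]) = f \<sigma> \<odot> f [\<delta>], and the multidimensional
  rightward property applied at \<sigma> = [] shows that f [\<delta>] depends on \<delta> only through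
  g \<delta> = G (f []) \<delta>. Choosing a preimage under g therefore gives an operator \<open>\<oplus>\<close>
  witnessing memorylessness, and the summarized version is f composed with the
  preimage choice mapped over the sequence, which is again homomorphic.
  Conversely, memorylessness gives f = h \<circ> map g, so f inherits homomorphy from h.\<close>

lemma homomorphic_comp_map:
  assumes "homomorphic F odot"
  shows "homomorphic (\<lambda>x. F (map k x)) odot"
  using assms by (simp add: homomorphic_def)

lemma summarized_map_eq:
  assumes "\<And>\<sigma> \<delta>. f (\<sigma> @ [\<delta>]) = oplus (f \<sigma>) (g \<delta>)"
  shows "summarized f oplus (map g s) = f s"
proof (induction s rule: rev_induct)
  case Nil
  then show ?case by (simp add: summarized_Nil)
next
  case (snoc \<delta> \<sigma>)
  then show ?case by (simp add: summarized_snoc assms)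
qed

lemma homomorphic_if_summarized_homomorphic:
  assumes "memoryless_wit f g oplus" and "homomorphic (summarized f oplus) odot"
  shows "homomorphic f odot"
proof -
  have "summarized f oplus (map g s) = f s" for s
    using assms(1) by (intro summarized_map_eq) (simp add: memoryless_wit_def)
  then show ?thesis
    using homomorphic_comp_map[OF assms(2), of g] by simp
qed

lemma summarized_eq_comp_map:
  assumes "homomorphic f odot"
  shows "summarized f (\<lambda>u v. odot u (f [k v])) x = f (map k x)"
proof (induction x rule: rev_induct)
  case Nil
  then show ?case by (simp add: summarized_Nil)
next
  case (snoc a x)
  then show ?case
    using assms by (simp add: summarized_snoc homomorphic_def)
qed

lemma multidim_rightward_singleton:
  fixes f :: "'c list list \<Rightarrow> 'd"
  assumes "multidim_rightward f"
  obtains g :: "'c list \<Rightarrow> 'd" and otimes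
  where "rightward g \<or> leftward g" and "\<And>\<delta>. f [\<delta>] = otimes (f []) (g \<delta>)"
proof -
  from assms obtain G :: "'d \<Rightarrow> 'c list \<Rightarrow> 'd" and otimes where
    "\<forall>d. rightward (G d) \<or> leftward (G d)"
    and "\<forall>\<sigma> \<delta>. f (\<sigma> @ [\<delta>]) = otimes (f \<sigma>) (G (f \<sigma>) \<delta>)"
    unfolding multidim_rightward_def by blast
  then show thesis
    using that[of "G (f [])" otimes] by (metis append_Nil)
qed

theorem theorem4p7:
  fixes f :: "'c list list \<Rightarrow> 'd" and odot :: "'d \<Rightarrow> 'd \<Rightarrow> 'd"
  assumes "multidim_rightward f"
  shows "homomorphic f odot \<longleftrightarrow>
           (\<exists>(g :: 'c list \<Rightarrow> 'd) (oplus :: 'd \<Rightarrow> 'd \<Rightarrow> 'd).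
              memoryless_wit f g oplus \<and> homomorphic (summarized f oplus) odot)"
proof
  assume hom: "homomorphic f odot"
  obtain g :: "'c list \<Rightarrow> 'd" and otimes where
    g: "rightward g \<or> leftward g" and singleton: "\<And>\<delta>. f [\<delta>] = otimes (f []) (g \<delta>)"
    using multidim_rightward_singleton[OF assms] by blast
  define oplus where "oplus = (\<lambda>u v. odot u (f [inv g v]))"
  have "f [inv g (g \<delta>)] = f [\<delta>]" for \<delta>
    by (simp add: singleton f_inv_into_f[OF rangeI])
  then have "memoryless_wit f g oplus"
    using g hom by (simp add: memoryless_wit_def homomorphic_def oplus_def)
  moreover have "summarized f oplus = (\<lambda>x. f (map (inv g) x))"
    unfolding oplus_def using summarized_eq_comp_map[OF hom] by blast
  then have "homomorphic (summarized f oplus) odot"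
    using homomorphic_comp_map[OF hom] by simp
  ultimately show "\<exists>g oplus. memoryless_wit f g oplus \<and> homomorphic (summarized f oplus) odot"
    by blast
next
  assume "\<exists>g oplus. memoryless_wit f g oplus \<and> homomorphic (summarized f oplus) odot"
  then show "homomorphic f odot"
    using homomorphic_if_summarized_homomorphic by blast
qed

end
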